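(* Let $0\le\lambda<\gamma\le\delta$ and let $\mathfrak{f}=\mathfrak{s}+\overline{\mathfrak{t}}\in\mathcal{H}^0$. Then $\mathfrak{f}\in\mathcal{R}_H^0(\gamma,\delta,\lambda)$ if and only if $F_\epsilon=\mathfrak{s}+\epsilon\mathfrak{t}\in\mathcal{R}(\gamma,\delta,\lambda)$ for each $\epsilon\in\mathbb{C}$ with $|\epsilon|=1$.
   Context: Let $\mathcal{U}=\{z\in\mathbb{C}:|z|<1\}$. $\mathcal{H}^0$ denotes the class of complex-valued harmonic functions $\mathfrak{f}=\mathfrak{s}+\overline{\mathfrak{t}}$ on $\mathcal{U}$, where $\mathfrak{s}(z)=z+\sum_{m\ge2}a_mz^m$ and $\mathfrak{t}(z)=\sum_{m\ge2}b_mz^m$ are analytic in $\mathcal{U}$. $\mathcal{A}$ denotes the class of analytic functions $F$ in $\mathcal{U}$ with $F(0)=0$, $F'(0)=1$. For real $0\le\lambda<\gamma\le\delta$, $\mathcal{R}_H^0(\gamma,\delta,\lambda)$ is the class of $\mathfrak{f}=\mathfrak{s}+\overline{\mathfrak{t}}\in\mathcal{H}^0$ such that for all $z\in\mathcal{U}$, $\mathrm{Re}\left[\gamma\mathfrak{s}'(z)+\delta z\mathfrak{s}''(z)+\frac{\delta-\gamma}{2}z^2\mathfrak{s}'''(z)-\lambda\right]>\left|\gamma\mathfrak{t}'(z)+\delta z\mathfrak{t}''(z)+\frac{\delta-\gamma}{2}z^2\mathfrak{t}'''(z)\right|$, and $\mathcal{R}(\gamma,\delta,\lambda)$ is the class of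 $F\in\mathcal{A}$ such that $\mathrm{Re}\{\gamma F'(z)+\delta zF''(z)+\frac{\delta-\gamma}{2}z^2F'''(z)\}>\lambda$ for all $z\in\mathcal{U}$. *)

theory Defs
  imports "HOL-Complex_Analysis.Complex_Analysis"
begin

definition unit_disc :: "complex set" where
  "unit_disc = ball 0 1"

text \<open>The class H^0: pairs (s, t) of analytic functions on the unit disc with
  s(0) = 0, s'(0) = 1, t(0) = 0, t'(0) = 0; f = s + conj t.\<close>
definition H0 :: "(complex \<Rightarrow> complex) \<Rightarrow> (complex \<Rightarrow> complex) \<Rightarrow> bool" where
  "H0 s t \<longleftrightarrow> s holomorphic_on unit_disc \<and> t holomorphic_on unit_disc \<and>
     s 0 = 0 \<and> deriv s 0 = 1 \<and> t 0 = 0 \<and> deriv t 0 = 0"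

definition classA :: "(complex \<Rightarrow> complex) \<Rightarrow> bool" where
  "classA F \<longleftrightarrow> F holomorphic_on unit_disc \<and> F 0 = 0 \<and> deriv F 0 = 1"

definition Lop :: "real \<Rightarrow> real \<Rightarrow> (complex \<Rightarrow> complex) \<Rightarrow> complex \<Rightarrow> complex" where
  "Lop \<gamma> \<delta> g z = of_real \<gamma> * deriv g z + of_real \<delta> * z * (deriv ^^ 2) g z
      + of_real ((\<delta> - \<gamma>) / 2) * z ^ 2 * (deriv ^^ 3) g z"

definition RH0 :: "real \<Rightarrow> real \<Rightarrow> real \<Rightarrow> (complex \<Rightarrow> complex) \<Rightarrow> (complex \<Rightarrow> complex) \<Rightarrow> bool" where
  "RH0 \<gamma> \<delta> lam s t \<longleftrightarrow> H0 s t \<and>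
     (\<forall>z\<in>unit_disc. Re (Lop \<gamma> \<delta> s z - of_real lam) > cmod (Lop \<gamma> \<delta> t z))"

definition Rclass :: "real \<Rightarrow> real \<Rightarrow> real \<Rightarrow> (complex \<Rightarrow> complex) \<Rightarrow> bool" where
  "Rclass \<gamma> \<delta> lam F \<longleftrightarrow> classA F \<and> (\<forall>z\<in>unit_disc. Re (Lop \<gamma> \<delta> F z) > lam)"

end

theory Submission
  imports Defs
begin

text \<open>The operator Lop is complex linear, so Lop (s + \<epsilon> t) = Lop s + \<epsilon> Lop t, and
  for complex numbers c, w one has |w| < Re c iff Re (c + \<epsilon> w) > 0 for every unimodular \<epsilon>:
  the worst rotation turns \<epsilon> w into -|w|. Hence both conditions agree pointwise in z.\<close>

lemma higher_deriv_add_cmult: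
  assumes "s holomorphic_on S" "t holomorphic_on S" "open S" "z \<in> S"
  shows "(deriv ^^ n) (\<lambda>w. s w + e * t w) z = (deriv ^^ n) s z + e * (deriv ^^ n) t z"
proof -
  have "(\<lambda>w. e * t w) holomorphic_on S"
    using assms(2) by (intro holomorphic_intros)
  then have "(deriv ^^ n) (\<lambda>w. s w + e * t w) z = (deriv ^^ n) s z + (deriv ^^ n) (\<lambda>w. e * t w) z"
    using assms by (intro higher_deriv_add)
  also have "(deriv ^^ n) (\<lambda>w. e * t w) z = e * (deriv ^^ n) t z"
    using assms by (intro higher_deriv_cmult)
  finally show ?thesis .
qed

lemma deriv_add_cmult:
  assumes "s holomorphic_on S" "t holomorphic_on S" "open S" "z \<in> S"
  shows "deriv (\<lambda>w. s w + e * t w) z = deriv s z + e * deriv t z"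
  using higher_deriv_add_cmult[OF assms, of 1] by simp

lemma Lop_add_cmult:
  assumes "s holomorphic_on S" "t holomorphic_on S" "open S" "z \<in> S"
  shows "Lop \<gamma> \<delta> (\<lambda>w. s w + e * t w) z = Lop \<gamma> \<delta> s z + e * Lop \<gamma> \<delta> t z"
  unfolding Lop_def deriv_add_cmult[OF assms] higher_deriv_add_cmult[OF assms]
  by (simp add: ring_distribs mult.left_commute)

lemma classA_add_cmult:
  assumes "H0 s t"
  shows "classA (\<lambda>z. s z + e * t z)"
proof -
  have "deriv (\<lambda>w. s w + e * t w) 0 = deriv s 0 + e * deriv t 0"
    using assms by (intro deriv_add_cmult[of _ unit_disc]) (auto simp: H0_def unit_disc_def)
  then show ?thesis
    using assms by (auto simp: classA_def H0_def intro!: holomorphic_intros)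
qed

lemma norm_less_Re_iff_unimodular:
  fixes c w :: complex
  shows "cmod w < Re c \<longleftrightarrow> (\<forall>\<epsilon>. cmod \<epsilon> = 1 \<longrightarrow> 0 < Re (c + \<epsilon> * w))"
proof
  assume w: "cmod w < Re c"
  show "\<forall>\<epsilon>. cmod \<epsilon> = 1 \<longrightarrow> 0 < Re (c + \<epsilon> * w)"
  proof (intro allI impI)
    fix \<epsilon> :: complex
    assume "cmod \<epsilon> = 1"
    then have "- Re (\<epsilon> * w) \<le> cmod w"
      using abs_Re_le_cmod[of "\<epsilon> * w"] by (simp add: norm_mult)
    with w show "0 < Re (c + \<epsilon> * w)" by simp
  qed
next
  assume all: "\<forall>\<epsilon>. cmod \<epsilon> = 1 \<longrightarrow> 0 < Re (c + \<epsilon> * w)"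
  define \<epsilon> where "\<epsilon> = (if w = 0 then -1 else - cnj w / of_real (cmod w))"
  have "cmod \<epsilon> = 1"
    by (auto simp: \<epsilon>_def norm_divide)
  then have "0 < Re (c + \<epsilon> * w)"
    using all by blast
  moreover have "\<epsilon> * w = - of_real (cmod w)"
    by (auto simp: \<epsilon>_def field_simps complex_norm_square[symmetric] power2_eq_square)
  ultimately show "cmod w < Re c"
    by simp
qed

theorem theorem2:
  fixes \<gamma> \<delta> lam :: real and s t :: "complex \<Rightarrow> complex"
  assumes "0 \<le> lam" and "lam < \<gamma>" and "\<gamma> \<le> \<delta>"
    and "H0 s t"
  shows "RH0 \<gamma> \<delta> lam s t \<longleftrightarrow>
         (\<forall>\<epsilon>::complex. cmod \<epsilon> = 1 \<longrightarrow> Rclass \<gamma> \<delta> lam (\<lambda>z. s z + \<epsilon> * t z))"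
proof -
  have pointwise: "Re (Lop \<gamma> \<delta> s z - of_real lam) > cmod (Lop \<gamma> \<delta> t z) \<longleftrightarrow>
      (\<forall>\<epsilon>::complex. cmod \<epsilon> = 1 \<longrightarrow> Re (Lop \<gamma> \<delta> (\<lambda>w. s w + \<epsilon> * t w) z) > lam)"
    if "z \<in> unit_disc" for z
  proof -
    have "Lop \<gamma> \<delta> (\<lambda>w. s w + \<epsilon> * t w) z = Lop \<gamma> \<delta> s z + \<epsilon> * Lop \<gamma> \<delta> t z" for \<epsilon>
      using assms(4) that by (intro Lop_add_cmult) (auto simp: H0_def unit_disc_def)
    then show ?thesis
      using norm_less_Re_iff_unimodular[of "Lop \<gamma> \<delta> t z" "Lop \<gamma> \<delta> s z - of_real lam"]
      by (simp add: algebra_simps)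
  qed
  show ?thesis
    unfolding RH0_def Rclass_def using assms(4) classA_add_cmult pointwise by blast
qed

end
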